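(* Let $M$ be a manifold of dimension $n\ge3$ with pseudo-Riemannian metric $g$, and let $(\nabla,g,\nabla^* )$ be a conjugate triple of torsion free connections such that $\nabla^*$ is Ricci symmetric, projectively flat and equiaffine Einstein. Then $\tau$ is constant.
   Context: Conjugate triple: $u\,g(v,w)=g(\nabla_uv,w)+g(v,\nabla^*_uw)$. For a connection $\nabla^*$ with curvature operator $\mathcal{R}^*(u,v)=\nabla^*_u\nabla^*_v-\nabla^*_v\nabla^*_u-\nabla^*_{[u,v]}$, $Ric^*(x,y)=\mathrm{Tr}(z\mapsto\mathcal{R}^*(z,x)y)$; Ricci symmetric means $Ric^*$ symmetric; equiaffine Einstein means $Ric^*=\lambda g$ for some smooth function $\lambda$. Projectively flat: locally projectively equivalent to a flat torsion free connection. $\tau$ denotes the generalized scalar curvature, the $g$-trace of $Ric^*$ (equal to the $g$-trace of the Ricci tensor of $\nabla$). The considerations are local ("constant" means locally constant). *)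

theory Defs
  imports "HOL-Analysis.Analysis"
begin

text \<open>Local (coordinate) setting: an open set U of R^n plays the role of a chart domain
of M.  Coordinate vector fields are the axis directions.\<close>

definition pd :: "'n::finite \<Rightarrow> (real^'n \<Rightarrow> real) \<Rightarrow> real^'n \<Rightarrow> real" where
  "pd i f x = frechet_derivative f (at x) (axis i 1)"

fun Ck :: "nat \<Rightarrow> (real^'n::finite) set \<Rightarrow> (real^'n \<Rightarrow> real) \<Rightarrow> bool" where
  "Ck 0 U f = continuous_on U f"
| "Ck (Suc k) U f = (f differentiable_on U \<and> (\<forall>i. Ck k U (pd i f)))"

definition smooth_fun_on :: "(real^'n::finite) set \<Rightarrow> (real^'n \<Rightarrow> real) \<Rightarrow> bool" where
  "smooth_fun_on U f = (\<forall>k. Ck k U f)"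

text \<open>A connection is given by Christoffel symbols: G x i j k is the k-th component of
 nabla_{d_i} d_j at x.\<close>
type_synonym 'n conn = "real^'n \<Rightarrow> 'n \<Rightarrow> 'n \<Rightarrow> 'n \<Rightarrow> real"
type_synonym 'n metric = "real^'n \<Rightarrow> 'n \<Rightarrow> 'n \<Rightarrow> real"

definition smooth_conn :: "(real^'n::finite) set \<Rightarrow> 'n conn \<Rightarrow> bool" where
  "smooth_conn U G = (\<forall>i j k. smooth_fun_on U (\<lambda>x. G x i j k))"

definition torsion_free :: "(real^'n::finite) set \<Rightarrow> 'n conn \<Rightarrow> bool" where
  "torsion_free U G = (\<forall>x\<in>U. \<forall>i j k. G x i j k = G x j i k)"

text \<open>curv G x a b c l = l-th component of R(d_a,d_b)d_c, where
  R(u,v) = nabla_u nabla_v - nabla_v nabla_u - nabla_[u,v] (and [d_a,d_b]=0).\<close>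
definition curv :: "'n::finite conn \<Rightarrow> real^'n \<Rightarrow> 'n \<Rightarrow> 'n \<Rightarrow> 'n \<Rightarrow> 'n \<Rightarrow> real" where
  "curv G x a b c l =
     pd a (\<lambda>y. G y b c l) x - pd b (\<lambda>y. G y a c l) x
     + (\<Sum>m\<in>UNIV. G x b c m * G x a m l) - (\<Sum>m\<in>UNIV. G x a c m * G x b m l)"

definition ric :: "'n::finite conn \<Rightarrow> real^'n \<Rightarrow> 'n \<Rightarrow> 'n \<Rightarrow> real" where
  "ric G x j k = (\<Sum>i\<in>UNIV. curv G x i j k i)"

definition flat :: "(real^'n::finite) set \<Rightarrow> 'n conn \<Rightarrow> bool" where
  "flat U G = (\<forall>x\<in>U. \<forall>a b c l. curv G x a b c l = 0)"

definition ricci_symmetric :: "(real^'n::finite) set \<Rightarrow> 'n conn \<Rightarrow> bool" where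
  "ricci_symmetric U G = (\<forall>x\<in>U. \<forall>j k. ric G x j k = ric G x k j)"

definition gmat :: "'n::finite metric \<Rightarrow> real^'n \<Rightarrow> real^'n^'n" where
  "gmat g x = (\<chi> i j. g x i j)"

definition pseudo_riemannian :: "(real^'n::finite) set \<Rightarrow> 'n metric \<Rightarrow> bool" where
  "pseudo_riemannian U g =
     ((\<forall>i j. smooth_fun_on U (\<lambda>x. g x i j)) \<and>
      (\<forall>x\<in>U. \<forall>i j. g x i j = g x j i) \<and>
      (\<forall>x\<in>U. det (gmat g x) \<noteq> 0))"

text \<open>Conjugate triple: u g(v,w) = g(nabla_u v, w) + g(v, nabla*_u w), on coordinate fields.\<close>
definition conjugate_triple :: "(real^'n::finite) set \<Rightarrow> 'n conn \<Rightarrow> 'n metric \<Rightarrow> 'n conn \<Rightarrow> bool" where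
  "conjugate_triple U G g Gs =
     (\<forall>x\<in>U. \<forall>k i j. pd k (\<lambda>y. g y i j) x =
        (\<Sum>l\<in>UNIV. G x k i l * g x l j) + (\<Sum>l\<in>UNIV. Gs x k j l * g x i l))"

text \<open>Projective equivalence of torsion free connections:
  nabla'_X Y = nabla_X Y + rho(X) Y + rho(Y) X.\<close>
definition projectively_flat :: "(real^'n::finite) set \<Rightarrow> 'n conn \<Rightarrow> bool" where
  "projectively_flat U G =
     (\<forall>p\<in>U. \<exists>V D rho. open V \<and> p \<in> V \<and> V \<subseteq> U \<and>
        smooth_conn V D \<and> torsion_free V D \<and> flat V D \<and>
        (\<forall>i. smooth_fun_on V (\<lambda>x. rho x i)) \<and>
        (\<forall>x\<in>V. \<forall>i j k. G x i j k = D x i j k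
            + (if k = j then rho x i else 0) + (if k = i then rho x j else 0)))"

definition equiaffine_einstein :: "(real^'n::finite) set \<Rightarrow> 'n conn \<Rightarrow> 'n metric \<Rightarrow> bool" where
  "equiaffine_einstein U G g =
     (\<exists>lam. smooth_fun_on U lam \<and> (\<forall>x\<in>U. \<forall>i j. ric G x i j = lam x * g x i j))"

definition gen_scalar_curv :: "'n::finite metric \<Rightarrow> 'n conn \<Rightarrow> real^'n \<Rightarrow> real" where
  "gen_scalar_curv g Gs x = (\<Sum>i\<in>UNIV. \<Sum>j\<in>UNIV. matrix_inv (gmat g x) $ i $ j * ric Gs x i j)"

definition locally_constant_on :: "(real^'n::finite) set \<Rightarrow> (real^'n \<Rightarrow> real) \<Rightarrow> bool" where
  "locally_constant_on U f = (\<forall>p\<in>U. \<exists>V. open V \<and> p \<in> V \<and> (\<forall>x\<in>V \<inter> U. f x = f p))"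

end

theory Submission
  imports Defs
begin

text \<open>Near every point \<open>\<nabla>\<^sup>* = D + \<rho> \<otimes> id + id \<otimes> \<rho>\<close> with \<open>D\<close> flat and torsion free.
  The curvature of \<open>\<nabla>\<^sup>*\<close> is then expressed through \<open>P = \<nabla>\<^sup>D\<rho> - \<rho> \<otimes> \<rho>\<close>;
  Ricci symmetry forces \<open>d\<rho> = 0\<close>, whence \<open>Ric\<^sup>* = -(n - 1) P\<close> and the Einstein
  condition gives \<open>P = \<mu> g\<close> with \<open>\<mu> = -\<lambda>/(n - 1)\<close>.  Flatness of \<open>D\<close> makes \<open>P\<close>
  a Codazzi tensor for \<open>\<nabla>\<^sup>*\<close>, and conjugacy with the torsion free \<open>\<nabla>\<close> makes
  \<open>(\<nabla>\<^sup>*\<^sub>X g)(Y, Z)\<close> symmetric in \<open>X, Y\<close>.  Hence \<open>d\<mu>(X) g(Y, Z)\<close> is symmetric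
  in \<open>X, Y\<close>, which for a nondegenerate \<open>g\<close> and \<open>n \<ge> 2\<close> forces \<open>d\<mu> = 0\<close>.
  So \<open>\<lambda>\<close> and \<open>\<tau> = n \<lambda>\<close> are locally constant.\<close>

lemma pd_eq_derivative: "(f has_derivative f') (at x) \<Longrightarrow> pd i f x = f' (axis i 1)"
  unfolding pd_def using frechet_derivative_at by metis

lemma pd_cong_open:
  assumes "open V" "x \<in> V" "\<And>y. y \<in> V \<Longrightarrow> f y = h y"
  shows "pd i f x = pd i h x"
proof -
  have "(f has_derivative f') (at x) \<longleftrightarrow> (h has_derivative f') (at x)" for f'
    using has_derivative_transform_within_open[OF _ assms(1,2)] assms(3) by metis
  then show ?thesis
    unfolding pd_def frechet_derivative_def by simp
qed

lemma pd_add: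
  "f differentiable (at x) \<Longrightarrow> h differentiable (at x) \<Longrightarrow>
    pd i (\<lambda>y. f y + h y) x = pd i f x + pd i h x"
  unfolding pd_def
  by (metis (mono_tags) frechet_derivative_at frechet_derivative_works has_derivative_add)

lemma pd_diff:
  "f differentiable (at x) \<Longrightarrow> h differentiable (at x) \<Longrightarrow>
    pd i (\<lambda>y. f y - h y) x = pd i f x - pd i h x"
  unfolding pd_def
  by (metis (mono_tags) frechet_derivative_at frechet_derivative_works has_derivative_diff)

lemma pd_mult:
  assumes "f differentiable (at x)" "h differentiable (at x)"
  shows "pd i (\<lambda>y. f y * h y :: real) x = f x * pd i h x + pd i f x * h x"
  using pd_eq_derivative[OF has_derivative_mult[OF assms[THEN frechet_derivative_works[THEN iffD1]]]]
  unfolding pd_def by simp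

lemma pd_const: "pd i (\<lambda>y. c) x = 0"
  using pd_eq_derivative[of "\<lambda>y. c" "\<lambda>v. 0" x i] by simp

lemma pd_cmult: "f differentiable (at x) \<Longrightarrow> pd i (\<lambda>y. c * f y :: real) x = c * pd i f x"
  using pd_mult[of "\<lambda>y. c" x f i] by (simp add: pd_const)

lemma pd_sum:
  assumes "\<And>m. m \<in> A \<Longrightarrow> f m differentiable (at x)"
  shows "pd i (\<lambda>y. \<Sum>m\<in>A. f m y) x = (\<Sum>m\<in>A. pd i (f m) x)"
proof -
  have "((\<lambda>y. \<Sum>m\<in>A. f m y) has_derivative (\<lambda>v. \<Sum>m\<in>A. frechet_derivative (f m) (at x) v)) (at x)"
    by (rule has_derivative_sum) (use assms frechet_derivative_works in blast)
  from pd_eq_derivative[OF this] show ?thesis by (simp add: pd_def)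
qed

lemma smooth_fun_on_differentiable:
  "smooth_fun_on S f \<Longrightarrow> open S \<Longrightarrow> x \<in> S \<Longrightarrow> f differentiable (at x)"
  unfolding smooth_fun_on_def by (metis Ck.simps(2) at_within_open differentiable_on_def)

lemma smooth_fun_on_pd: "smooth_fun_on S f \<Longrightarrow> smooth_fun_on S (pd i f)"
  unfolding smooth_fun_on_def by (metis Ck.simps(2))

lemma smooth_fun_on_continuous_on: "smooth_fun_on S f \<Longrightarrow> continuous_on S f"
  unfolding smooth_fun_on_def by (metis Ck.simps(1))

section \<open>Symmetry of second partial derivatives\<close>

lemma has_real_derivative_along_line:
  assumes "f differentiable (at (a + t *\<^sub>R v))"
  shows "((\<lambda>s. f (a + s *\<^sub>R v)) has_real_derivative frechet_derivative f (at (a + t *\<^sub>R v)) v) (at t)"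
proof -
  define f' where "f' = frechet_derivative f (at (a + t *\<^sub>R v))"
  have g: "((\<lambda>s. a + s *\<^sub>R v) has_derivative (\<lambda>h. h *\<^sub>R v)) (at t)"
    by (intro derivative_eq_intros) auto
  have f: "(f has_derivative f') (at (a + t *\<^sub>R v))" using assms frechet_derivative_works f'_def by blast
  have c: "((\<lambda>s. f (a + s *\<^sub>R v)) has_derivative (\<lambda>h. f' (h *\<^sub>R v))) (at t)"
    using diff_chain_at[OF g f] unfolding o_def .
  have lin: "linear f'" using f has_derivative_linear by blast
  have eq: "(\<lambda>h. f' (h *\<^sub>R v)) = (*) (f' v)"
  proof
    fix h show "f' (h *\<^sub>R v) = f' v * h" using linear_scale[OF lin, of h v] by simp
  qed
  show ?thesis unfolding has_field_derivative_def f'_def[symmetric] using c unfolding eq .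
qed

lemma has_real_derivative_along_axis:
  assumes "f differentiable (at (a + t *\<^sub>R axis i 1))"
  shows "((\<lambda>s. f (a + s *\<^sub>R axis i 1)) has_real_derivative pd i f (a + t *\<^sub>R axis i 1)) (at t)"
  using has_real_derivative_along_line[OF assms] unfolding pd_def .

lemma pd_mean_value:
  assumes "0 < h" and "\<And>t. 0 \<le> t \<Longrightarrow> t \<le> h \<Longrightarrow> f differentiable (at (a + t *\<^sub>R axis i 1))"
  shows "\<exists>t. 0 < t \<and> t < h \<and> f (a + h *\<^sub>R axis i 1) - f a = h * pd i f (a + t *\<^sub>R axis i 1)"
proof -
  let ?u = "\<lambda>s. f (a + s *\<^sub>R axis i 1)"
  have d: "(?u has_real_derivative pd i f (a + t *\<^sub>R axis i 1)) (at t)" if "0 \<le> t" "t \<le> h" for t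
    using has_real_derivative_along_axis assms(2) that by blast
  have c: "continuous_on {0..h} ?u"
    by (rule continuous_at_imp_continuous_on) (metis atLeastAtMost_iff d DERIV_isCont)
  have dif: "?u differentiable (at x)" if "0<x" "x<h" for x
    using d[of x] that unfolding real_differentiable_def by auto
  have "\<exists>l z. 0 < z \<and> z < h \<and> DERIV ?u z :> l \<and> ?u h - ?u 0 = (h - 0) * l"
    by (rule MVT[OF assms(1) c dif])
  then obtain l t where t: "0 < t" "t < h" "DERIV ?u t :> l" "?u h - ?u 0 = (h - 0) * l"
    by blast
  have "l = pd i f (a + t *\<^sub>R axis i 1)" using DERIV_unique[OF t(3) d[of t]] t by simp
  then show ?thesis using t by auto
qed

lemma differentiable_at_shift: "f differentiable (at (y + c)) \<Longrightarrow> (\<lambda>z. f (z + c)) differentiable (at y)"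
  using differentiable_chain_at[of "\<lambda>z. z + c" y f] by (simp add: o_def)

lemma pd_shift:
  assumes "f differentiable (at (y + c))"
  shows "pd i (\<lambda>z. f (z + c)) y = pd i f (y + c)"
proof -
  have g: "((\<lambda>z. z + c) has_derivative (\<lambda>h. h)) (at y)" by (intro derivative_eq_intros) auto
  have "((\<lambda>z. f (z + c)) has_derivative frechet_derivative f (at (y + c))) (at y)"
    using diff_chain_at[OF g assms[unfolded frechet_derivative_works]] unfolding o_def .
  from pd_eq_derivative[OF this, of i] show ?thesis by (simp add: pd_def)
qed

lemma second_difference_mean_value:
  fixes f :: "real^'n::finite \<Rightarrow> real"
  assumes h: "0 < h"
    and box: "\<And>s t. 0 \<le> s \<Longrightarrow> s \<le> h \<Longrightarrow> 0 \<le> t \<Longrightarrow> t \<le> h \<Longrightarrow> x + s *\<^sub>R axis i 1 + t *\<^sub>R axis j 1 \<in> S"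
    and df: "\<And>y. y \<in> S \<Longrightarrow> f differentiable (at y)"
    and dfi: "\<And>y. y \<in> S \<Longrightarrow> pd i f differentiable (at y)"
  shows "\<exists>s t. 0 < s \<and> s < h \<and> 0 < t \<and> t < h \<and>
    f (x + h *\<^sub>R axis i 1 + h *\<^sub>R axis j 1) - f (x + h *\<^sub>R axis i 1) - f (x + h *\<^sub>R axis j 1) + f x
      = h * h * pd j (pd i f) (x + s *\<^sub>R axis i 1 + t *\<^sub>R axis j 1)"
proof -
  define c where "c = h *\<^sub>R axis j (1::real)"
  define u where "u = (\<lambda>y. f (y + c) - f y)"
  have dfa: "f differentiable (at (x + s *\<^sub>R axis i 1))"
    and dfb: "f differentiable (at (x + s *\<^sub>R axis i 1 + c))" if "0 \<le> s" "s \<le> h" for s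
    using df box[of s 0] box[of s h] that h unfolding c_def by auto
  have du: "u differentiable (at (x + s *\<^sub>R axis i 1))" if "0 \<le> s" "s \<le> h" for s
    unfolding u_def using differentiable_at_shift[OF dfb[OF that]] dfa[OF that] by (intro differentiable_diff) auto
  obtain s where s: "0 < s" "s < h" "u (x + h *\<^sub>R axis i 1) - u x = h * pd i u (x + s *\<^sub>R axis i 1)"
    using pd_mean_value[OF h, of u x i] du by auto
  have pu: "pd i u (x + s *\<^sub>R axis i 1) = pd i f (x + s *\<^sub>R axis i 1 + c) - pd i f (x + s *\<^sub>R axis i 1)"
    unfolding u_def using pd_diff[OF differentiable_at_shift[OF dfb] dfa, of s i] pd_shift[OF dfb, of s i] s by simp
  have dpi: "pd i f differentiable (at (x + s *\<^sub>R axis i 1 + t *\<^sub>R axis j 1))" if "0 \<le> t" "t \<le> h" for t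
    using dfi box[of s t] s that by auto
  obtain t where t: "0 < t" "t < h" "pd i f (x + s *\<^sub>R axis i 1 + h *\<^sub>R axis j 1) - pd i f (x + s *\<^sub>R axis i 1)
      = h * pd j (pd i f) (x + s *\<^sub>R axis i 1 + t *\<^sub>R axis j 1)"
    using pd_mean_value[OF h, of "pd i f" "x + s *\<^sub>R axis i 1" j] dpi by auto
  have "f (x + h *\<^sub>R axis i 1 + h *\<^sub>R axis j 1) - f (x + h *\<^sub>R axis i 1) - f (x + h *\<^sub>R axis j 1) + f x
      = u (x + h *\<^sub>R axis i 1) - u x"
    unfolding u_def c_def by (simp add: add_ac)
  also have "\<dots> = h * h * pd j (pd i f) (x + s *\<^sub>R axis i 1 + t *\<^sub>R axis j 1)"
    using s(3) pu t(3) unfolding c_def by simp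
  finally show ?thesis using s t by blast
qed

lemma dist_add_axes_lt:
  fixes x :: "real^'n::finite"
  assumes "0 \<le> s" "0 \<le> t" "s + t < r"
  shows "dist (x + s *\<^sub>R axis a 1 + t *\<^sub>R axis b 1) x < r"
proof -
  have "norm (s *\<^sub>R axis a 1 + t *\<^sub>R axis b 1 :: real^'n) \<le> norm (s *\<^sub>R axis a (1::real)) + norm (t *\<^sub>R axis b (1::real))"
    by (rule norm_triangle_ineq)
  with assms show ?thesis by (simp add: dist_norm add.assoc)
qed

lemma pd_commute:
  fixes f :: "real^'n::finite \<Rightarrow> real"
  assumes S: "open S" "x \<in> S"
    and df: "\<And>y. y \<in> S \<Longrightarrow> f differentiable (at y)"
    and dfi: "\<And>y. y \<in> S \<Longrightarrow> pd i f differentiable (at y)"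
    and dfj: "\<And>y. y \<in> S \<Longrightarrow> pd j f differentiable (at y)"
    and c1: "continuous_on S (pd j (pd i f))" and c2: "continuous_on S (pd i (pd j f))"
  shows "pd j (pd i f) x = pd i (pd j f) x"
proof (rule ccontr)
  assume ne: "pd j (pd i f) x \<noteq> pd i (pd j f) x"
  define e where "e = \<bar>pd j (pd i f) x - pd i (pd j f) x\<bar> / 2"
  have e: "e > 0" using ne unfolding e_def by auto
  obtain r where r: "r > 0" "ball x r \<subseteq> S" using S open_contains_ball by blast
  have "isCont (pd j (pd i f)) x" using c1 S continuous_on_eq_continuous_at by blast
  then obtain d1 where d1: "d1 > 0" "\<And>y. dist y x < d1 \<Longrightarrow> dist (pd j (pd i f) y) (pd j (pd i f) x) < e"
    using e unfolding continuous_at_eps_delta by blast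
  have "isCont (pd i (pd j f)) x" using c2 S continuous_on_eq_continuous_at by blast
  then obtain d2 where d2: "d2 > 0" "\<And>y. dist y x < d2 \<Longrightarrow> dist (pd i (pd j f) y) (pd i (pd j f) x) < e"
    using e unfolding continuous_at_eps_delta by blast
  define h where "h = min r (min d1 d2) / 3"
  have h: "h > 0" using r d1 d2 unfolding h_def by auto
  have close: "dist (x + s *\<^sub>R axis a (1::real) + t *\<^sub>R axis b (1::real)) x < min r (min d1 d2)"
    if "0 \<le> s" "s \<le> h" "0 \<le> t" "t \<le> h" for s t a b
    using that h unfolding h_def by (intro dist_add_axes_lt) auto
  have box: "x + s *\<^sub>R axis a (1::real) + t *\<^sub>R axis b (1::real) \<in> S"
    if "0 \<le> s" "s \<le> h" "0 \<le> t" "t \<le> h" for s t a b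
    using close[OF that, of a b] r by (auto simp: dist_commute)
  obtain s1 t1 where st1: "0 < s1" "s1 < h" "0 < t1" "t1 < h"
    "f (x + h *\<^sub>R axis i 1 + h *\<^sub>R axis j 1) - f (x + h *\<^sub>R axis i 1) - f (x + h *\<^sub>R axis j 1) + f x
      = h * h * pd j (pd i f) (x + s1 *\<^sub>R axis i 1 + t1 *\<^sub>R axis j 1)"
    using second_difference_mean_value[OF h box df dfi] by blast
  obtain s2 t2 where st2: "0 < s2" "s2 < h" "0 < t2" "t2 < h"
    "f (x + h *\<^sub>R axis j 1 + h *\<^sub>R axis i 1) - f (x + h *\<^sub>R axis j 1) - f (x + h *\<^sub>R axis i 1) + f x
      = h * h * pd i (pd j f) (x + s2 *\<^sub>R axis j 1 + t2 *\<^sub>R axis i 1)"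
    using second_difference_mean_value[OF h box df dfj] by blast
  have E: "f (x + h *\<^sub>R axis j 1 + h *\<^sub>R axis i 1) = f (x + h *\<^sub>R axis i 1 + h *\<^sub>R axis j 1)" by (simp add: add_ac)
  have "h * h * pd j (pd i f) (x + s1 *\<^sub>R axis i 1 + t1 *\<^sub>R axis j 1)
      = h * h * pd i (pd j f) (x + s2 *\<^sub>R axis j 1 + t2 *\<^sub>R axis i 1)"
    using st1(5) st2(5) E by linarith
  then have eq: "pd j (pd i f) (x + s1 *\<^sub>R axis i 1 + t1 *\<^sub>R axis j 1)
      = pd i (pd j f) (x + s2 *\<^sub>R axis j 1 + t2 *\<^sub>R axis i 1)" using h by simp
  have a1: "dist (pd j (pd i f) (x + s1 *\<^sub>R axis i 1 + t1 *\<^sub>R axis j 1)) (pd j (pd i f) x) < e"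
    using d1(2) close[of s1 t1 i j] st1 by auto
  have a2: "dist (pd i (pd j f) (x + s2 *\<^sub>R axis j 1 + t2 *\<^sub>R axis i 1)) (pd i (pd j f) x) < e"
    using d2(2) close[of s2 t2 j i] st2 by auto
  have "\<bar>p - a\<bar> < \<bar>a - b\<bar> / 2 \<Longrightarrow> \<bar>p - b\<bar> < \<bar>a - b\<bar> / 2 \<Longrightarrow> False" for p a b :: real
    by (simp add: abs_if split: if_splits)
  with a1 a2 eq show False unfolding e_def dist_real_def by metis
qed

lemma smooth_fun_on_pd_commute:
  fixes f :: "real^'n::finite \<Rightarrow> real"
  assumes "smooth_fun_on S f" "open S" "x \<in> S"
  shows "pd j (pd i f) x = pd i (pd j f) x"
proof (rule pd_commute[OF assms(2,3)])
  show "\<And>y. y \<in> S \<Longrightarrow> f differentiable (at y)" using smooth_fun_on_differentiable assms by blast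
  show "\<And>y. y \<in> S \<Longrightarrow> pd i f differentiable (at y)" using smooth_fun_on_differentiable smooth_fun_on_pd assms by blast
  show "\<And>y. y \<in> S \<Longrightarrow> pd j f differentiable (at y)" using smooth_fun_on_differentiable smooth_fun_on_pd assms by blast
  show "continuous_on S (pd j (pd i f))" using smooth_fun_on_continuous_on smooth_fun_on_pd assms by blast
  show "continuous_on S (pd i (pd j f))" using smooth_fun_on_continuous_on smooth_fun_on_pd assms by blast
qed

lemma has_derivative_zero_if_pd_zero:
  fixes f :: "real^'n::finite \<Rightarrow> real"
  assumes "f differentiable (at y)" "\<And>i. pd i f y = 0"
  shows "(f has_derivative (\<lambda>h. 0)) (at y)"
proof -
  let ?f' = "frechet_derivative f (at y)"
  have d: "(f has_derivative ?f') (at y)" using assms(1) frechet_derivative_works by blast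
  have lin: "linear ?f'" using d has_derivative_linear by blast
  have "?f' h = 0" for h
  proof -
    have "?f' h = ?f' (\<Sum>i\<in>UNIV. h$i *\<^sub>R axis i 1)"
      using basis_expansion[of h] by (simp add: scalar_mult_eq_scaleR)
    also have "\<dots> = (\<Sum>i\<in>UNIV. h$i * ?f' (axis i 1))"
      by (simp add: linear_sum[OF lin] linear_scale[OF lin])
    also have "\<dots> = 0" using assms(2) unfolding pd_def by simp
    finally show ?thesis .
  qed
  then have "?f' = (\<lambda>h. 0)" by auto
  then show ?thesis using d by simp
qed

lemma locally_constant_on_if_pd_zero:
  assumes "open U" and diff: "\<And>x. x \<in> U \<Longrightarrow> f differentiable (at x)"
    and pd_zero: "\<And>x i. x \<in> U \<Longrightarrow> pd i f x = 0"
  shows "locally_constant_on U f"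
  unfolding locally_constant_on_def
proof
  fix p assume "p \<in> U"
  then obtain r where r: "r > 0" "ball p r \<subseteq> U" using \<open>open U\<close> open_contains_ball by blast
  have "\<exists>c. \<forall>y\<in>ball p r. f y = c"
  proof (rule has_derivative_zero_constant)
    fix y assume "y \<in> ball p r"
    with r have "y \<in> U" by blast
    then show "(f has_derivative (\<lambda>h. 0)) (at y within ball p r)"
      by (metis has_derivative_at_withinI has_derivative_zero_if_pd_zero diff pd_zero)
  qed simp
  then obtain c where c: "\<And>y. y \<in> ball p r \<Longrightarrow> f y = c" by blast
  have "p \<in> ball p r" using r(1) by simp
  then show "\<exists>V. open V \<and> p \<in> V \<and> (\<forall>x\<in>V \<inter> U. f x = f p)"
    using c by (intro exI[of _ "ball p r"]) auto
qed

lemma locally_constant_on_cong: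
  assumes "locally_constant_on U f" "\<And>x. x \<in> U \<Longrightarrow> f x = h x"
  shows "locally_constant_on U h"
  unfolding locally_constant_on_def
proof
  fix p assume "p \<in> U"
  with assms(1) obtain V where "open V" "p \<in> V" "\<forall>x\<in>V \<inter> U. f x = f p"
    unfolding locally_constant_on_def by blast
  moreover from this(3) have "\<forall>x\<in>V \<inter> U. h x = h p"
    using assms(2) \<open>p \<in> U\<close> by simp
  ultimately show "\<exists>V. open V \<and> p \<in> V \<and> (\<forall>x\<in>V \<inter> U. h x = h p)"
    by blast
qed

lemma proportional_rows_coeff_zero:
  fixes A :: "real^'n^'n" and d :: "'n \<Rightarrow> real"
  assumes "det A \<noteq> 0" "a \<noteq> b" "\<And>c. d b * A$a$c = d a * A$b$c"
  shows "d b = 0"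
proof (rule ccontr)
  assume nz: "d b \<noteq> 0"
  define k where "k = d a / d b"
  have ra: "row a A = k *s row b A"
    unfolding k_def row_def vec_eq_iff using assms(3) nz
    by (auto simp: field_simps)
  let ?B = "(\<chi> i. if i = a then row a A + (- k) *s row b A else row i A) :: real^'n^'n"
  have "det ?B = det A" by (rule det_row_operation[OF assms(2)])
  moreover have "row a ?B = 0" unfolding ra by (simp add: row_def vec_eq_iff)
  then have "det ?B = 0" by (rule det_zero_row(1))
  ultimately show False using assms(1) by simp
qed

lemma matrix_inv_left:
  fixes A :: "real^'n^'n"
  assumes "det A \<noteq> 0"
  shows "matrix_inv A ** A = mat 1"
proof -
  have "invertible A" using assms invertible_det_nz by blast
  then obtain A' where "A ** A' = mat 1 \<and> A' ** A = mat 1" unfolding invertible_def by blast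
  then have "A ** matrix_inv A = mat 1 \<and> matrix_inv A ** A = mat 1"
    unfolding matrix_inv_def by (rule someI)
  then show ?thesis by blast
qed

lemma sum_matrix_inv_gmat:
  fixes g :: "'n::finite metric"
  assumes "det (gmat g y) \<noteq> 0" "\<And>i j. g y i j = g y j i"
  shows "(\<Sum>i\<in>UNIV. \<Sum>j\<in>UNIV. matrix_inv (gmat g y) $ i $ j * g y i j) = real CARD('n)"
proof -
  have "(\<Sum>j\<in>UNIV. matrix_inv (gmat g y) $ i $ j * g y i j) = 1" for i
  proof -
    have "(matrix_inv (gmat g y) ** gmat g y) $ i $ i = 1"
      using matrix_inv_left[OF assms(1)] by (simp add: mat_def)
    then show ?thesis unfolding matrix_matrix_mult_def gmat_def using assms(2) by simp
  qed
  then show ?thesis by simp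
qed

section \<open>Projective change of a flat connection\<close>

lemma times_if_zero: "y * (if P then x else 0) = (if P then y * x else (0::'a::mult_zero))"
  and if_zero_times: "(if P then x else 0) * y = (if P then x * y else (0::'a::mult_zero))"
  by simp_all

lemmas if_zero_simps = times_if_zero if_zero_times sum.delta sum.delta'

definition proj_change :: "'n::finite conn \<Rightarrow> (real^'n \<Rightarrow> 'n \<Rightarrow> real) \<Rightarrow> 'n conn" where
  "proj_change D rho x i j k = D x i j k + (if k = j then rho x i else 0) + (if k = i then rho x j else 0)"

text \<open>In index-free form \<open>proj_schouten D rho = \<nabla>\<^sup>D\<rho> - \<rho> \<otimes> \<rho>\<close>.\<close>

definition proj_schouten :: "'n::finite conn \<Rightarrow> (real^'n \<Rightarrow> 'n \<Rightarrow> real) \<Rightarrow> real^'n \<Rightarrow> 'n \<Rightarrow> 'n \<Rightarrow> real" where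
  "proj_schouten D rho x a c = pd a (\<lambda>y. rho y c) x - (\<Sum>m\<in>UNIV. D x a c m * rho x m) - rho x a * rho x c"

lemma curv_cong_open:
  assumes "open V" "x \<in> V" "\<And>y i j k. y \<in> V \<Longrightarrow> G y i j k = G' y i j k"
  shows "curv G x a b c l = curv G' x a b c l"
proof -
  have "pd i (\<lambda>y. G y j k m) x = pd i (\<lambda>y. G' y j k m) x" for i j k m
    by (rule pd_cong_open[OF assms(1,2)]) (simp add: assms(3))
  then show ?thesis unfolding curv_def using assms(2,3) by simp
qed

lemma ric_cong_open:
  assumes "open V" "x \<in> V" "\<And>y i j k. y \<in> V \<Longrightarrow> G y i j k = G' y i j k"
  shows "ric G x j k = ric G' x j k"
  unfolding ric_def using curv_cong_open[OF assms] by simp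

lemma pd_proj_change:
  assumes "\<And>i j k. (\<lambda>y. D y i j k) differentiable (at x)" "\<And>i. (\<lambda>y. rho y i) differentiable (at x)"
  shows "pd a (\<lambda>y. proj_change D rho y b c l) x = pd a (\<lambda>y. D y b c l) x
     + (if l = c then pd a (\<lambda>y. rho y b) x else 0) + (if l = b then pd a (\<lambda>y. rho y c) x else 0)"
  unfolding proj_change_def using assms
  by (cases "l = c"; cases "l = b") (simp_all add: pd_add pd_cmult)

lemma curv_proj_change:
  fixes D :: "'n::finite conn"
  assumes diff_D: "\<And>i j k. (\<lambda>y. D y i j k) differentiable (at x)"
    and diff_rho: "\<And>i. (\<lambda>y. rho y i) differentiable (at x)"
    and sym_D: "\<And>i j k. D x i j k = D x j i k"
    and flat_D: "curv D x a b c l = 0"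
  shows "curv (proj_change D rho) x a b c l =
    (if l = c then pd a (\<lambda>y. rho y b) x - pd b (\<lambda>y. rho y a) x else 0)
    + (if l = b then proj_schouten D rho x a c else 0) - (if l = a then proj_schouten D rho x b c else 0)"
proof -
  let ?r = "rho x" and ?dr = "\<lambda>i j. pd i (\<lambda>y. rho y j) x"
  have quadratic: "(\<Sum>m\<in>UNIV. proj_change D rho x b c m * proj_change D rho x a m l)
      - (\<Sum>m\<in>UNIV. proj_change D rho x a c m * proj_change D rho x b m l)
    = (\<Sum>m\<in>UNIV. D x b c m * D x a m l) - (\<Sum>m\<in>UNIV. D x a c m * D x b m l)
      + (if l = a then (\<Sum>m\<in>UNIV. D x b c m * ?r m) + ?r b * ?r c else 0)
      - (if l = b then (\<Sum>m\<in>UNIV. D x a c m * ?r m) + ?r a * ?r c else 0)"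
    using sym_D[of a b l] unfolding proj_change_def
    by (simp add: ring_distribs if_zero_simps sum.distrib sum_distrib_left[symmetric] algebra_simps)
  have "curv (proj_change D rho) x a b c l
    = curv D x a b c l + (if l = c then ?dr a b else 0) - (if l = c then ?dr b a else 0)
      + (if l = b then ?dr a c else 0) - (if l = a then ?dr b c else 0)
      + (if l = a then (\<Sum>m\<in>UNIV. D x b c m * ?r m) + ?r b * ?r c else 0)
      - (if l = b then (\<Sum>m\<in>UNIV. D x a c m * ?r m) + ?r a * ?r c else 0)"
    using quadratic unfolding curv_def pd_proj_change[OF diff_D diff_rho] by linarith
  then show ?thesis using flat_D unfolding proj_schouten_def by simp
qed

lemma ric_proj_change:
  fixes D :: "'n::finite conn"
  assumes diff_D: "\<And>i j k. (\<lambda>y. D y i j k) differentiable (at x)"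
    and diff_rho: "\<And>i. (\<lambda>y. rho y i) differentiable (at x)"
    and sym_D: "\<And>i j k. D x i j k = D x j i k"
    and flat_D: "\<And>a b c l. curv D x a b c l = 0"
  shows "ric (proj_change D rho) x j k = pd k (\<lambda>y. rho y j) x - pd j (\<lambda>y. rho y k) x
    - (real CARD('n) - 1) * proj_schouten D rho x j k"
  unfolding ric_def curv_proj_change[OF diff_D diff_rho sym_D flat_D]
  by (simp add: sum.distrib sum_subtractf algebra_simps)

lemma proj_schouten_antisym:
  assumes "\<And>i j k. D x i j k = D x j i k"
  shows "proj_schouten D rho x j k - proj_schouten D rho x k j = pd j (\<lambda>y. rho y k) x - pd k (\<lambda>y. rho y j) x"
  unfolding proj_schouten_def using assms by (simp add: mult.commute)

text \<open>The antisymmetric part of the Ricci tensor of the projective change is a multiple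
  \<open>-(n + 1)\<close> of the exterior derivative of \<open>rho\<close>.\<close>

lemma pd_rho_sym_if_ric_proj_change_sym:
  fixes D :: "'n::finite conn"
  assumes diff_D: "\<And>i j k. (\<lambda>y. D y i j k) differentiable (at x)"
    and diff_rho: "\<And>i. (\<lambda>y. rho y i) differentiable (at x)"
    and sym_D: "\<And>i j k. D x i j k = D x j i k"
    and flat_D: "\<And>a b c l. curv D x a b c l = 0"
    and ric_sym: "ric (proj_change D rho) x j k = ric (proj_change D rho) x k j"
  shows "pd j (\<lambda>y. rho y k) x = pd k (\<lambda>y. rho y j) x"
proof -
  have P_jk: "proj_schouten D rho x j k = proj_schouten D rho x k j + (pd j (\<lambda>y. rho y k) x - pd k (\<lambda>y. rho y j) x)"
    using proj_schouten_antisym[of D x rho j k, OF sym_D] by simp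
  have "(real CARD('n) + 1) * (pd j (\<lambda>y. rho y k) x - pd k (\<lambda>y. rho y j) x) = 0"
    using ric_sym unfolding ric_proj_change[OF diff_D diff_rho sym_D flat_D] P_jk by (simp add: algebra_simps)
  then show ?thesis by simp
qed

lemma pd_proj_schouten:
  assumes diff_D: "\<And>i j k. (\<lambda>y. D y i j k) differentiable (at x)"
    and diff_rho: "\<And>i. (\<lambda>y. rho y i) differentiable (at x)"
    and diff_pd_rho: "\<And>i j. pd i (\<lambda>y. rho y j) differentiable (at x)"
  shows "pd b (\<lambda>y. proj_schouten D rho y a c) x = pd b (pd a (\<lambda>y. rho y c)) x
    - (\<Sum>m\<in>UNIV. D x a c m * pd b (\<lambda>y. rho y m) x + pd b (\<lambda>y. D y a c m) x * rho x m)
    - (rho x a * pd b (\<lambda>y. rho y c) x + pd b (\<lambda>y. rho y a) x * rho x c)"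
  unfolding proj_schouten_def using assms by (simp add: pd_diff pd_sum pd_mult)

text \<open>Pointwise algebra behind the Codazzi equation: \<open>DD b a c m\<close> stands for
  \<open>\<partial>\<^sub>b D\<^sup>m\<^sub>a\<^sub>c\<close> and \<open>dr a b\<close> for \<open>\<partial>\<^sub>a rho\<^sub>b\<close>.\<close>

lemma codazzi_identity_flat:
  fixes D :: "'n::finite \<Rightarrow> 'n \<Rightarrow> 'n \<Rightarrow> real" and r :: "'n \<Rightarrow> real"
    and DD :: "'n \<Rightarrow> 'n \<Rightarrow> 'n \<Rightarrow> 'n \<Rightarrow> real" and dr :: "'n \<Rightarrow> 'n \<Rightarrow> real"
    and P :: "'n \<Rightarrow> 'n \<Rightarrow> real"
  assumes drsym: "dr a b = dr b a"
    and flat: "\<And>m. DD b a c m - DD a b c m + (\<Sum>k\<in>UNIV. D a c k * D b k m) - (\<Sum>k\<in>UNIV. D b c k * D a k m) = 0"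
    and P: "\<And>i j. P i j = dr i j - (\<Sum>m\<in>UNIV. D i j m * r m) - r i * r j"
  shows "(- (\<Sum>m\<in>UNIV. D a c m * dr b m + DD b a c m * r m) - (r a * dr b c + dr b a * r c))
       - (- (\<Sum>m\<in>UNIV. D b c m * dr a m + DD a b c m * r m) - (r b * dr a c + dr a b * r c))
     = - (\<Sum>m\<in>UNIV. D a c m * P b m) + (\<Sum>m\<in>UNIV. D b c m * P a m) - r a * P b c + r b * P a c"
proof -
  have f2: "DD b a c m * r m = DD a b c m * r m - (\<Sum>k\<in>UNIV. D a c k * D b k m * r m) + (\<Sum>k\<in>UNIV. D b c k * D a k m * r m)" for m
  proof -
    have e: "DD b a c m = DD a b c m - (\<Sum>k\<in>UNIV. D a c k * D b k m) + (\<Sum>k\<in>UNIV. D b c k * D a k m)"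
      using flat[of m] by linarith
    show ?thesis by (subst e) (simp add: algebra_simps sum_distrib_right sum_distrib_left)
  qed
  have sw1: "(\<Sum>m\<in>UNIV. \<Sum>k\<in>UNIV. D a c k * D b k m * r m) = (\<Sum>m\<in>UNIV. D a c m * (\<Sum>k\<in>UNIV. D b m k * r k))"
    by (subst sum.swap) (simp add: sum_distrib_left mult.assoc)
  have sw2: "(\<Sum>m\<in>UNIV. \<Sum>k\<in>UNIV. D b c k * D a k m * r m) = (\<Sum>m\<in>UNIV. D b c m * (\<Sum>k\<in>UNIV. D a m k * r k))"
    by (subst sum.swap) (simp add: sum_distrib_left mult.assoc)
  have L: "(\<Sum>m\<in>UNIV. D a c m * dr b m + DD b a c m * r m)
       = (\<Sum>m\<in>UNIV. D a c m * dr b m) + (\<Sum>m\<in>UNIV. DD a b c m * r m)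
         - (\<Sum>m\<in>UNIV. D a c m * (\<Sum>k\<in>UNIV. D b m k * r k)) + (\<Sum>m\<in>UNIV. D b c m * (\<Sum>k\<in>UNIV. D a m k * r k))"
    unfolding f2 sum.distrib sum_subtractf sw1[symmetric] sw2[symmetric] by simp
  have pb: "(\<Sum>m\<in>UNIV. D a c m * P b m) = (\<Sum>m\<in>UNIV. D a c m * dr b m)
     - (\<Sum>m\<in>UNIV. D a c m * (\<Sum>k\<in>UNIV. D b m k * r k)) - r b * (\<Sum>m\<in>UNIV. D a c m * r m)"
    unfolding P right_diff_distrib sum_subtractf by (simp add: sum_distrib_left mult_ac)
  have pa: "(\<Sum>m\<in>UNIV. D b c m * P a m) = (\<Sum>m\<in>UNIV. D b c m * dr a m)
     - (\<Sum>m\<in>UNIV. D b c m * (\<Sum>k\<in>UNIV. D a m k * r k)) - r a * (\<Sum>m\<in>UNIV. D b c m * r m)"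
    unfolding P right_diff_distrib sum_subtractf by (simp add: sum_distrib_left mult_ac)
  have L2: "(\<Sum>m\<in>UNIV. D b c m * dr a m + DD a b c m * r m)
       = (\<Sum>m\<in>UNIV. D b c m * dr a m) + (\<Sum>m\<in>UNIV. DD a b c m * r m)"
    by (rule sum.distrib)
  show ?thesis unfolding L L2 pb pa P[of b c] P[of a c] using drsym
    by (simp add: algebra_simps)
qed

lemma proj_schouten_codazzi:
  fixes D :: "'n::finite conn"
  assumes "open V" "x \<in> V"
    and smooth_rho: "\<And>i. smooth_fun_on V (\<lambda>y. rho y i)"
    and diff_D: "\<And>i j k. (\<lambda>y. D y i j k) differentiable (at x)"
    and flat_D: "\<And>a b c l. curv D x a b c l = 0"
    and sym_pd_rho: "\<And>i j. pd i (\<lambda>y. rho y j) x = pd j (\<lambda>y. rho y i) x"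
  shows "pd b (\<lambda>y. proj_schouten D rho y a c) x - pd a (\<lambda>y. proj_schouten D rho y b c) x
    = - (\<Sum>m\<in>UNIV. D x a c m * proj_schouten D rho x b m) + (\<Sum>m\<in>UNIV. D x b c m * proj_schouten D rho x a m)
      - rho x a * proj_schouten D rho x b c + rho x b * proj_schouten D rho x a c"
proof -
  have diff_rho: "\<And>i. (\<lambda>y. rho y i) differentiable (at x)"
    using smooth_fun_on_differentiable[OF smooth_rho] assms(1,2) by blast
  have diff_pd_rho: "\<And>i j. pd i (\<lambda>y. rho y j) differentiable (at x)"
    using smooth_fun_on_differentiable[OF smooth_fun_on_pd[OF smooth_rho]] assms(1,2) by blast
  have "pd b (pd a (\<lambda>y. rho y c)) x = pd a (pd b (\<lambda>y. rho y c)) x"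
    using smooth_fun_on_pd_commute[OF smooth_rho assms(1,2)] .
  moreover have "(- (\<Sum>m\<in>UNIV. D x a c m * pd b (\<lambda>y. rho y m) x + pd b (\<lambda>y. D y a c m) x * rho x m)
        - (rho x a * pd b (\<lambda>y. rho y c) x + pd b (\<lambda>y. rho y a) x * rho x c))
      - (- (\<Sum>m\<in>UNIV. D x b c m * pd a (\<lambda>y. rho y m) x + pd a (\<lambda>y. D y b c m) x * rho x m)
        - (rho x b * pd a (\<lambda>y. rho y c) x + pd a (\<lambda>y. rho y b) x * rho x c))
    = - (\<Sum>m\<in>UNIV. D x a c m * proj_schouten D rho x b m) + (\<Sum>m\<in>UNIV. D x b c m * proj_schouten D rho x a m)
      - rho x a * proj_schouten D rho x b c + rho x b * proj_schouten D rho x a c"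
    by (rule codazzi_identity_flat[where DD = "\<lambda>b a c m. pd b (\<lambda>y. D y a c m) x"])
      (use sym_pd_rho flat_D[unfolded curv_def] in \<open>auto simp: proj_schouten_def\<close>)
  ultimately show ?thesis
    unfolding pd_proj_schouten[OF diff_D diff_rho diff_pd_rho] by linarith
qed

section \<open>Covariant derivatives of bilinear forms\<close>

text \<open>\<open>cov_deriv G T x b a c\<close> is \<open>(\<nabla>\<^bsub>\<partial>\<^sub>b\<^esub> T)(\<partial>\<^sub>a, \<partial>\<^sub>c)\<close> at \<open>x\<close>.\<close>

definition cov_deriv :: "'n::finite conn \<Rightarrow> (real^'n \<Rightarrow> 'n \<Rightarrow> 'n \<Rightarrow> real) \<Rightarrow> real^'n \<Rightarrow> 'n \<Rightarrow> 'n \<Rightarrow> 'n \<Rightarrow> real" where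
  "cov_deriv G T x b a c =
    pd b (\<lambda>y. T y a c) x - (\<Sum>m\<in>UNIV. G x b a m * T x m c) - (\<Sum>m\<in>UNIV. G x b c m * T x a m)"

lemma cov_deriv_proj_change_antisym:
  assumes sym_D: "\<And>i j k. D x i j k = D x j i k" and sym_T: "\<And>i j. T x i j = T x j i"
  shows "cov_deriv (proj_change D rho) T x b a c - cov_deriv (proj_change D rho) T x a b c
    = pd b (\<lambda>y. T y a c) x - pd a (\<lambda>y. T y b c) x
      + (\<Sum>m\<in>UNIV. D x a c m * T x b m) - (\<Sum>m\<in>UNIV. D x b c m * T x a m)
      + rho x a * T x b c - rho x b * T x a c"
proof -
  have "(\<Sum>m\<in>UNIV. D x b a m * T x m c) = (\<Sum>m\<in>UNIV. D x a b m * T x m c)"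
    using sym_D by simp
  moreover have "T x a b = T x b a" by (rule sym_T)
  ultimately show ?thesis
    unfolding cov_deriv_def proj_change_def
    by (simp add: ring_distribs if_zero_simps sum.distrib algebra_simps)
qed

lemma cov_deriv_proj_schouten_sym:
  fixes D :: "'n::finite conn"
  assumes "open V" "x \<in> V"
    and smooth_rho: "\<And>i. smooth_fun_on V (\<lambda>y. rho y i)"
    and diff_D: "\<And>i j k. (\<lambda>y. D y i j k) differentiable (at x)"
    and sym_D: "\<And>i j k. D x i j k = D x j i k"
    and flat_D: "\<And>a b c l. curv D x a b c l = 0"
    and sym_pd_rho: "\<And>i j. pd i (\<lambda>y. rho y j) x = pd j (\<lambda>y. rho y i) x"
  shows "cov_deriv (proj_change D rho) (proj_schouten D rho) x b a c
    = cov_deriv (proj_change D rho) (proj_schouten D rho) x a b c"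
proof -
  have sym_P: "proj_schouten D rho x i j = proj_schouten D rho x j i" for i j
    using proj_schouten_antisym[of D x rho i j, OF sym_D] sym_pd_rho[of i j] by simp
  show ?thesis
    using cov_deriv_proj_change_antisym[of D x "proj_schouten D rho" rho b a c, OF sym_D sym_P]
      proj_schouten_codazzi[OF assms(1,2) smooth_rho diff_D flat_D sym_pd_rho, of b a c]
    by linarith
qed

lemma cov_deriv_conjugate_metric:
  assumes "conjugate_triple U G g Gs" "x \<in> U"
  shows "cov_deriv Gs g x b a c = (\<Sum>l\<in>UNIV. (G x b a l - Gs x b a l) * g x l c)"
  using assms unfolding cov_deriv_def conjugate_triple_def
  by (simp add: left_diff_distrib sum_subtractf)

lemma cov_deriv_conjugate_metric_sym:
  assumes "conjugate_triple U G g Gs" "torsion_free U G" "torsion_free U Gs" "x \<in> U"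
  shows "cov_deriv Gs g x b a c = cov_deriv Gs g x a b c"
proof -
  have "G x b a l = G x a b l" "Gs x b a l = Gs x a b l" for l
    using assms(2-4) unfolding torsion_free_def by blast+
  then show ?thesis unfolding cov_deriv_conjugate_metric[OF assms(1,4)] by simp
qed

lemma cov_deriv_conformal:
  assumes "open V" "x \<in> V" "\<And>y a c. y \<in> V \<Longrightarrow> T y a c = mu y * S y a c"
    and "mu differentiable (at x)" "\<And>a c. (\<lambda>y. S y a c) differentiable (at x)"
  shows "cov_deriv G T x b a c = pd b mu x * S x a c + mu x * cov_deriv G S x b a c"
proof -
  have "pd b (\<lambda>y. T y a c) x = pd b (\<lambda>y. mu y * S y a c) x"
    by (rule pd_cong_open[OF assms(1,2)]) (simp add: assms(3))
  then show ?thesis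
    unfolding cov_deriv_def using assms(2,3) pd_mult[OF assms(4,5)]
    by (simp add: sum_distrib_left algebra_simps)
qed

lemma pd_conformal_factor_eq_zero:
  fixes g :: "'n::finite metric"
  assumes "CARD('n) \<ge> 2" "open V" "x \<in> V" "det (gmat g x) \<noteq> 0"
    and conformal: "\<And>y a c. y \<in> V \<Longrightarrow> T y a c = mu y * g y a c"
    and diff_mu: "mu differentiable (at x)" and diff_g: "\<And>a c. (\<lambda>y. g y a c) differentiable (at x)"
    and codazzi_T: "\<And>a b c. cov_deriv G T x b a c = cov_deriv G T x a b c"
    and codazzi_g: "\<And>a b c. cov_deriv G g x b a c = cov_deriv G g x a b c"
  shows "pd b mu x = 0"
proof -
  note cov_deriv_T = cov_deriv_conformal[OF assms(2,3) conformal diff_mu diff_g]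
  have rows: "pd b mu x * gmat g x $ a $ c = pd a mu x * gmat g x $ b $ c" for a c
  proof -
    have "pd b mu x * g x a c + mu x * cov_deriv G g x b a c = cov_deriv G T x b a c"
      by (rule cov_deriv_T[symmetric])
    also have "\<dots> = cov_deriv G T x a b c" by (rule codazzi_T)
    also have "\<dots> = pd a mu x * g x b c + mu x * cov_deriv G g x a b c" by (rule cov_deriv_T)
    finally show ?thesis using codazzi_g[of a b c] by (simp add: gmat_def)
  qed
  have "\<exists>a::'n. a \<noteq> b"
  proof (rule ccontr)
    assume "\<nexists>a::'n. a \<noteq> b"
    then have "UNIV = {b}" by auto
    then have "CARD('n) = card {b}" by (rule arg_cong)
    with assms(1) show False by simp
  qed
  then obtain a where "a \<noteq> b" by blast
  then show ?thesis
    by (rule proportional_rows_coeff_zero[of "gmat g x" a b "\<lambda>i. pd i mu x", OF assms(4) _ rows])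
qed

section \<open>The Einstein factor is locally constant\<close>

lemma pd_einstein_factor_eq_zero:
  fixes g :: "'n::finite metric" and G Gs :: "'n conn"
  assumes "CARD('n) \<ge> 2" "open U" "pseudo_riemannian U g"
    and "torsion_free U G" "torsion_free U Gs" "conjugate_triple U G g Gs"
    and "ricci_symmetric U Gs" "projectively_flat U Gs"
    and smooth_lam: "smooth_fun_on U lam"
    and einstein: "\<And>y i j. y \<in> U \<Longrightarrow> ric Gs y i j = lam y * g y i j"
    and "x \<in> U"
  shows "pd b lam x = 0"
proof -
  let ?n = "real CARD('n)"
  obtain V D rho where V: "open V" "x \<in> V" "V \<subseteq> U" and "smooth_conn V D" "torsion_free V D" "flat V D"
    and smooth_rho: "\<And>i. smooth_fun_on V (\<lambda>y. rho y i)"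
    and Gs_V: "\<And>y i j k. y \<in> V \<Longrightarrow> Gs y i j k = proj_change D rho y i j k"
    using \<open>projectively_flat U Gs\<close> \<open>x \<in> U\<close> unfolding projectively_flat_def proj_change_def by metis
  then have sym_D: "\<And>y i j k. y \<in> V \<Longrightarrow> D y i j k = D y j i k"
    and flat_D: "\<And>y a b c l. y \<in> V \<Longrightarrow> curv D y a b c l = 0"
    unfolding torsion_free_def flat_def by blast+
  have diff_D: "\<And>y i j k. y \<in> V \<Longrightarrow> (\<lambda>z. D z i j k) differentiable (at y)"
    using \<open>smooth_conn V D\<close> smooth_fun_on_differentiable V(1) unfolding smooth_conn_def by blast
  have diff_rho: "\<And>y i. y \<in> V \<Longrightarrow> (\<lambda>z. rho z i) differentiable (at y)"
    using smooth_rho smooth_fun_on_differentiable V(1) by blast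
  have ric_V: "ric Gs y j k = ric (proj_change D rho) y j k" if "y \<in> V" for y j k
    using ric_cong_open[OF V(1) that Gs_V] .
  have sym_pd_rho: "pd j (\<lambda>z. rho z k) y = pd k (\<lambda>z. rho z j) y" if "y \<in> V" for y j k
  proof (rule pd_rho_sym_if_ric_proj_change_sym[OF diff_D diff_rho sym_D flat_D, OF that that that that])
    show "ric (proj_change D rho) y j k = ric (proj_change D rho) y k j"
      using \<open>ricci_symmetric U Gs\<close> V(3) that unfolding ricci_symmetric_def ric_V[OF that, symmetric] by blast
  qed
  define mu where "mu = (\<lambda>y. - 1 / (?n - 1) * lam y)"
  have schouten_V: "proj_schouten D rho y j k = mu y * g y j k" if "y \<in> V" for y j k
    using einstein[of y j k] ric_V[OF that] V(3) that assms(1)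
    unfolding ric_proj_change[OF diff_D diff_rho sym_D flat_D, OF that that that that] sym_pd_rho[OF that]
    by (auto simp: mu_def field_simps)
  have diff_mu: "mu differentiable (at x)"
    unfolding mu_def
    by (intro differentiable_mult differentiable_const smooth_fun_on_differentiable[OF smooth_lam assms(2,11)])
  have diff_g: "(\<lambda>y. g y a c) differentiable (at x)" for a c
    using \<open>pseudo_riemannian U g\<close> smooth_fun_on_differentiable assms(2,11)
    unfolding pseudo_riemannian_def by blast
  have "pd b mu x = 0"
  proof (rule pd_conformal_factor_eq_zero[OF assms(1) V(1,2) _ schouten_V diff_mu diff_g])
    show "det (gmat g x) \<noteq> 0"
      using \<open>pseudo_riemannian U g\<close> \<open>x \<in> U\<close> unfolding pseudo_riemannian_def by blast
    show "\<And>a b c. cov_deriv Gs (proj_schouten D rho) x b a c = cov_deriv Gs (proj_schouten D rho) x a b c"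
      using cov_deriv_proj_schouten_sym[OF V(1,2) smooth_rho diff_D sym_D flat_D sym_pd_rho, OF V(2) V(2) V(2) V(2)]
      unfolding cov_deriv_def Gs_V[OF V(2)] .
    show "\<And>a b c. cov_deriv Gs g x b a c = cov_deriv Gs g x a b c"
      using cov_deriv_conjugate_metric_sym[OF assms(6,4,5,11)] .
  qed
  then show ?thesis
    unfolding mu_def using pd_cmult[of lam x b "- 1 / (?n - 1)"]
      smooth_fun_on_differentiable[OF smooth_lam] assms(1,2,11) by simp
qed

lemma gen_scalar_curv_einstein:
  fixes g :: "'n::finite metric"
  assumes "pseudo_riemannian U g" "x \<in> U" "\<And>i j. ric Gs x i j = lam x * g x i j"
  shows "gen_scalar_curv g Gs x = real CARD('n) * lam x"
proof -
  have "gen_scalar_curv g Gs x = lam x * (\<Sum>i\<in>UNIV. \<Sum>j\<in>UNIV. matrix_inv (gmat g x) $ i $ j * g x i j)"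
    unfolding gen_scalar_curv_def assms(3) by (simp add: sum_distrib_left mult_ac)
  also have "\<dots> = lam x * real CARD('n)"
    using assms(1,2) unfolding pseudo_riemannian_def by (simp add: sum_matrix_inv_gmat)
  finally show ?thesis by simp
qed

theorem corollary9p11:
  fixes U :: "(real^'n) set" and g :: "'n metric" and G Gs :: "'n conn"
  assumes "CARD('n) \<ge> 3"
    and "open U"
    and "pseudo_riemannian U g"
    and "smooth_conn U G" and "smooth_conn U Gs"
    and "torsion_free U G" and "torsion_free U Gs"
    and "conjugate_triple U G g Gs"
    and "ricci_symmetric U Gs"
    and "projectively_flat U Gs"
    and "equiaffine_einstein U Gs g"
  shows "locally_constant_on U (gen_scalar_curv g Gs)"
proof -
  obtain lam where smooth_lam: "smooth_fun_on U lam"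
    and einstein: "\<And>x i j. x \<in> U \<Longrightarrow> ric Gs x i j = lam x * g x i j"
    using assms(11) unfolding equiaffine_einstein_def by blast
  have diff_lam: "\<And>x. x \<in> U \<Longrightarrow> lam differentiable (at x)"
    using smooth_fun_on_differentiable[OF smooth_lam assms(2)] .
  have "pd i (\<lambda>y. real CARD('n) * lam y) x = 0" if "x \<in> U" for x i
    using pd_einstein_factor_eq_zero[OF _ assms(2,3,6-10) smooth_lam einstein that] assms(1)
    by (simp add: pd_cmult diff_lam that)
  then have "locally_constant_on U (\<lambda>y. real CARD('n) * lam y)"
    using locally_constant_on_if_pd_zero[OF assms(2)] diff_lam by simp
  then show ?thesis
  proof (rule locally_constant_on_cong)
    fix x assume "x \<in> U"
    then show "real CARD('n) * lam x = gen_scalar_curv g Gs x"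
      using gen_scalar_curv_einstein[where lam = lam and Gs = Gs, OF assms(3) \<open>x \<in> U\<close> einstein[OF \<open>x \<in> U\<close>]] by simp
  qed
qed

end
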